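(* Let $\Bbbk$ be any (commutative unital) ring, let $r\ge1$ and $d>r+1$ be integers, and let $\alpha(d,r)=(d-r,1^r)$. For every partition $\lambda$ of $d$ with $\lambda\trianglerighteq\alpha(d,r)$ there is an embedding $M^\lambda\subseteq M^{\alpha(d,r)}$ of left $\Bbbk W_d$-modules.
   Context: $W_d$ is the symmetric group on $\{1,\dots,d\}$; for a partition (or weak composition) $\lambda$ of $d$, $W_\lambda$ is the Young subgroup stabilising the rows of the tableau obtained by writing $1,\dots,d$ left to right along the rows of the Young diagram of $\lambda$, and $M^\lambda=\Bbbk W_d\otimes_{\Bbbk W_\lambda}\Bbbk$ is the permutation module. $\trianglerighteq$ is the dominance order on partitions. *)

theory Defs
  imports "HOL-Combinatorics.Permutations"
begin

definition is_partition :: "nat \<Rightarrow> nat list \<Rightarrow> bool" where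
  "is_partition d xs \<longleftrightarrow> sorted_wrt (\<ge>) xs \<and> 0 \<notin> set xs \<and> sum_list xs = d"

definition dominates :: "nat list \<Rightarrow> nat list \<Rightarrow> bool" where
  "dominates lam mu \<longleftrightarrow> (\<forall>k. sum_list (take k mu) \<le> sum_list (take k lam))"

definition alpha :: "nat \<Rightarrow> nat \<Rightarrow> nat list" where
  "alpha d r = (d - r) # replicate r 1"

text \<open>Row (0-based) of the entry j (1 \<le> j \<le> d) when 1..d is written left to right
  along the rows of the Young diagram of xs.\<close>
definition row_of :: "nat list \<Rightarrow> nat \<Rightarrow> nat" where
  "row_of xs j = (LEAST i. j \<le> sum_list (take (Suc i) xs))"

definition Sym :: "nat \<Rightarrow> (nat \<Rightarrow> nat) set" where
  "Sym d = {\<sigma>. \<sigma> permutes {1..d}}"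

definition young_subgroup :: "nat \<Rightarrow> nat list \<Rightarrow> (nat \<Rightarrow> nat) set" where
  "young_subgroup d xs = {\<sigma> \<in> Sym d. \<forall>j\<in>{1..d}. row_of xs (\<sigma> j) = row_of xs j}"

definition cosets :: "nat \<Rightarrow> nat list \<Rightarrow> (nat \<Rightarrow> nat) set set" where
  "cosets d xs = {(\<lambda>\<tau>. \<sigma> \<circ> \<tau>) ` young_subgroup d xs | \<sigma>. \<sigma> \<in> Sym d}"

text \<open>The permutation module M^lambda = kW_d \<otimes>_{kW_lambda} k, realised as the free
  k-module on the left cosets W_d/W_lambda (basis sigma \<otimes> 1 \<leftrightarrow> sigma W_lambda):
  an element is its coefficient function on cosets.\<close>
definition perm_module :: "nat \<Rightarrow> nat list \<Rightarrow> ((nat \<Rightarrow> nat) set \<Rightarrow> 'k::comm_ring_1) set" where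
  "perm_module d xs = {v. \<forall>C. C \<notin> cosets d xs \<longrightarrow> v C = 0}"

text \<open>Left action of sigma in W_d: sigma . e_C = e_{sigma C}.\<close>
definition perm_act :: "(nat \<Rightarrow> nat) \<Rightarrow> ((nat \<Rightarrow> nat) set \<Rightarrow> 'k::comm_ring_1) \<Rightarrow> ((nat \<Rightarrow> nat) set \<Rightarrow> 'k)" where
  "perm_act \<sigma> v = (\<lambda>C. v ((\<lambda>\<tau>. inv \<sigma> \<circ> \<tau>) ` C))"

text \<open>Homomorphism of left kW_d-modules M^lam \<rightarrow> M^mu: k-linear and W_d-equivariant
  (equivalent, since W_d spans kW_d).\<close>
definition kW_hom :: "nat \<Rightarrow> nat list \<Rightarrow> nat list
    \<Rightarrow> (((nat \<Rightarrow> nat) set \<Rightarrow> 'k::comm_ring_1) \<Rightarrow> ((nat \<Rightarrow> nat) set \<Rightarrow> 'k)) \<Rightarrow> bool" where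
  "kW_hom d lam mu \<phi> \<longleftrightarrow>
     (\<forall>v\<in>perm_module d lam. \<phi> v \<in> perm_module d mu) \<and>
     (\<forall>u\<in>perm_module d lam. \<forall>v\<in>perm_module d lam. \<phi> (\<lambda>C. u C + v C) = (\<lambda>C. \<phi> u C + \<phi> v C)) \<and>
     (\<forall>c. \<forall>v\<in>perm_module d lam. \<phi> (\<lambda>C. c * v C) = (\<lambda>C. c * \<phi> v C)) \<and>
     (\<forall>\<sigma>\<in>Sym d. \<forall>v\<in>perm_module d lam. \<phi> (perm_act \<sigma> v) = perm_act \<sigma> (\<phi> v))"

definition kW_embedding :: "nat \<Rightarrow> nat list \<Rightarrow> nat list
    \<Rightarrow> (((nat \<Rightarrow> nat) set \<Rightarrow> 'k::comm_ring_1) \<Rightarrow> ((nat \<Rightarrow> nat) set \<Rightarrow> 'k)) \<Rightarrow> bool" where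
  "kW_embedding d lam mu \<phi> \<longleftrightarrow> kW_hom d lam mu \<phi> \<and> inj_on \<phi> (perm_module d lam)"

end

theory Submission
  imports Defs
begin

(* Dominating (d - r, 1, ..., 1) only requires the first row of lam to have length at least
   d - r, so the Young subgroup of alpha d r, the symmetric group on {1..d-r}, lies inside
   W_lam. Whenever W_mu is contained in W_lam, the map sending the basis vector of a coset s W_lam
   to the sum of the basis vectors of the cosets t W_mu contained in it is a kW_d-module map
   M^lam -> M^mu. It is injective because its coefficient at s W_mu is the coefficient of the
   argument at s W_lam, the unique W_lam-coset containing s W_mu. *)

lemma Sym_inv: "\<sigma> \<in> Sym d \<Longrightarrow> inv \<sigma> \<in> Sym d"
  unfolding Sym_def by (simp add: permutes_inv)

lemma Sym_comp: "\<sigma> \<in> Sym d \<Longrightarrow> \<tau> \<in> Sym d \<Longrightarrow> \<sigma> \<circ> \<tau> \<in> Sym d"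
  unfolding Sym_def by (simp add: permutes_compose)

lemma id_in_young_subgroup: "id \<in> young_subgroup d xs"
  unfolding young_subgroup_def Sym_def by (simp add: permutes_id)

lemma young_subgroup_comp:
  assumes "\<sigma> \<in> young_subgroup d xs" "\<tau> \<in> young_subgroup d xs"
  shows "\<sigma> \<circ> \<tau> \<in> young_subgroup d xs"
proof -
  have \<tau>: "\<tau> permutes {1..d}"
    using assms unfolding young_subgroup_def Sym_def by auto
  have "row_of xs (\<sigma> (\<tau> j)) = row_of xs j" if "j \<in> {1..d}" for j
    using assms that permutes_in_image[OF \<tau>] unfolding young_subgroup_def by auto
  moreover have "\<sigma> \<circ> \<tau> \<in> Sym d"
    using assms Sym_comp unfolding young_subgroup_def by blast
  ultimately show ?thesis
    unfolding young_subgroup_def by simp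
qed

lemma cosets_left_mult_inv_iff:
  assumes "\<sigma> \<in> Sym d"
  shows "(\<lambda>\<tau>. inv \<sigma> \<circ> \<tau>) ` D \<in> cosets d mu \<longleftrightarrow> D \<in> cosets d mu"
proof
  assume "(\<lambda>\<tau>. inv \<sigma> \<circ> \<tau>) ` D \<in> cosets d mu"
  then obtain \<rho> where \<rho>: "\<rho> \<in> Sym d"
    and eq: "(\<lambda>\<tau>. inv \<sigma> \<circ> \<tau>) ` D = (\<lambda>\<tau>. \<rho> \<circ> \<tau>) ` young_subgroup d mu"
    unfolding cosets_def by auto
  have "\<sigma> \<circ> inv \<sigma> = id"
    using assms unfolding Sym_def by (simp add: permutes_inv_o)
  then have cancel: "\<sigma> \<circ> (inv \<sigma> \<circ> \<tau>) = \<tau>" for \<tau>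
    by (metis comp_assoc id_comp)
  have "D = (\<lambda>\<tau>. \<sigma> \<circ> \<tau>) ` ((\<lambda>\<tau>. inv \<sigma> \<circ> \<tau>) ` D)"
    unfolding image_image cancel by simp
  also have "\<dots> = (\<lambda>\<tau>. (\<sigma> \<circ> \<rho>) \<circ> \<tau>) ` young_subgroup d mu"
    by (simp add: eq image_image o_assoc)
  finally show "D \<in> cosets d mu"
    unfolding cosets_def using Sym_comp[OF assms \<rho>] by blast
next
  assume "D \<in> cosets d mu"
  then obtain \<rho> where \<rho>: "\<rho> \<in> Sym d" and D: "D = (\<lambda>\<tau>. \<rho> \<circ> \<tau>) ` young_subgroup d mu"
    unfolding cosets_def by auto
  have "(\<lambda>\<tau>. inv \<sigma> \<circ> \<tau>) ` D = (\<lambda>\<tau>. (inv \<sigma> \<circ> \<rho>) \<circ> \<tau>) ` young_subgroup d mu"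
    by (simp add: D image_image o_assoc)
  then show "(\<lambda>\<tau>. inv \<sigma> \<circ> \<tau>) ` D \<in> cosets d mu"
    unfolding cosets_def using Sym_comp[OF Sym_inv[OF assms] \<rho>] by blast
qed

definition coset_saturation :: "(nat \<Rightarrow> nat) set \<Rightarrow> (nat \<Rightarrow> nat) set \<Rightarrow> (nat \<Rightarrow> nat) set" where
  "coset_saturation G D = (\<Union>\<sigma>\<in>D. (\<lambda>\<tau>. \<sigma> \<circ> \<tau>) ` G)"

lemma coset_saturation_left_mult:
  "coset_saturation G ((\<lambda>\<tau>. f \<circ> \<tau>) ` D) = (\<lambda>\<tau>. f \<circ> \<tau>) ` coset_saturation G D"
  unfolding coset_saturation_def image_UN image_image by (simp add: o_assoc)

lemma coset_saturation_young_coset: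
  assumes "young_subgroup d mu \<subseteq> young_subgroup d lam"
  shows "coset_saturation (young_subgroup d lam) ((\<lambda>\<tau>. s \<circ> \<tau>) ` young_subgroup d mu)
         = (\<lambda>\<tau>. s \<circ> \<tau>) ` young_subgroup d lam"
proof (rule antisym)
  show "coset_saturation (young_subgroup d lam) ((\<lambda>\<tau>. s \<circ> \<tau>) ` young_subgroup d mu)
        \<subseteq> (\<lambda>\<tau>. s \<circ> \<tau>) ` young_subgroup d lam"
  proof
    fix x assume "x \<in> coset_saturation (young_subgroup d lam) ((\<lambda>\<tau>. s \<circ> \<tau>) ` young_subgroup d mu)"
    then obtain h g where "h \<in> young_subgroup d mu" "g \<in> young_subgroup d lam"
      and x: "x = s \<circ> (h \<circ> g)"
      unfolding coset_saturation_def by (auto simp: o_assoc)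
    then have "h \<circ> g \<in> young_subgroup d lam"
      using assms young_subgroup_comp by blast
    with x show "x \<in> (\<lambda>\<tau>. s \<circ> \<tau>) ` young_subgroup d lam"
      by blast
  qed
  show "(\<lambda>\<tau>. s \<circ> \<tau>) ` young_subgroup d lam
        \<subseteq> coset_saturation (young_subgroup d lam) ((\<lambda>\<tau>. s \<circ> \<tau>) ` young_subgroup d mu)"
    using id_in_young_subgroup[of d mu]
    unfolding coset_saturation_def by (metis (no_types, lifting) UN_upper comp_id image_eqI)
qed

lemma kW_embedding_of_young_subgroup_subset:
  assumes sub: "young_subgroup d mu \<subseteq> young_subgroup d lam"
  shows "\<exists>\<phi> :: ((nat \<Rightarrow> nat) set \<Rightarrow> 'k::comm_ring_1) \<Rightarrow> ((nat \<Rightarrow> nat) set \<Rightarrow> 'k).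
           kW_embedding d lam mu \<phi>"
proof -
  let ?G = "young_subgroup d lam"
  define \<phi> :: "((nat \<Rightarrow> nat) set \<Rightarrow> 'k) \<Rightarrow> ((nat \<Rightarrow> nat) set \<Rightarrow> 'k)" where
    "\<phi> v = (\<lambda>D. if D \<in> cosets d mu then v (coset_saturation ?G D) else 0)" for v
  have hom: "kW_hom d lam mu \<phi>"
    unfolding kW_hom_def
  proof (intro conjI ballI allI)
    fix \<sigma> v assume "\<sigma> \<in> Sym d"
    then show "\<phi> (perm_act \<sigma> v) = perm_act \<sigma> (\<phi> v)"
      unfolding \<phi>_def perm_act_def
      by (auto simp: cosets_left_mult_inv_iff coset_saturation_left_mult)
  qed (auto simp: \<phi>_def perm_module_def)
  have "u C = v C"
    if u: "u \<in> perm_module d lam" and v: "v \<in> perm_module d lam" and eq: "\<phi> u = \<phi> v" for u v C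
  proof (cases "C \<in> cosets d lam")
    case False
    then show ?thesis using u v unfolding perm_module_def by auto
  next
    case True
    then obtain s where s: "s \<in> Sym d" and C: "C = (\<lambda>\<tau>. s \<circ> \<tau>) ` ?G"
      unfolding cosets_def by auto
    let ?D = "(\<lambda>\<tau>. s \<circ> \<tau>) ` young_subgroup d mu"
    have "?D \<in> cosets d mu"
      unfolding cosets_def using s by blast
    moreover have "coset_saturation ?G ?D = C"
      using coset_saturation_young_coset[OF sub] C by simp
    moreover have "\<phi> u ?D = \<phi> v ?D"
      using eq by simp
    ultimately show ?thesis
      unfolding \<phi>_def by simp
  qed
  then have "inj_on \<phi> (perm_module d lam)"
    by (intro inj_onI ext)
  with hom show ?thesis
    unfolding kW_embedding_def by blast
qed

lemma row_of_alpha: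
  assumes "x \<le> d" "r < d"
  shows "row_of (alpha d r) x = x - (d - r)"
  unfolding row_of_def alpha_def
  using assms by (intro Least_equality) (auto simp: sum_list_replicate)

lemma young_subgroup_alpha_subset:
  assumes "r < d" and first_row: "d - r \<le> sum_list (take 1 lam)"
  shows "young_subgroup d (alpha d r) \<subseteq> young_subgroup d lam"
proof
  fix \<sigma> assume \<sigma>: "\<sigma> \<in> young_subgroup d (alpha d r)"
  then have perm: "\<sigma> permutes {1..d}"
    unfolding young_subgroup_def Sym_def by auto
  have row0: "row_of lam j = 0" if "j \<le> d - r" for j
    unfolding row_of_def using first_row that by (intro Least_eq_0) simp
  have "row_of lam (\<sigma> j) = row_of lam j" if j: "j \<in> {1..d}" for j
  proof -
    have "\<sigma> j \<in> {1..d}"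
      using permutes_in_image[OF perm] j by blast
    then have "\<sigma> j - (d - r) = j - (d - r)"
      using \<sigma> j row_of_alpha[of "\<sigma> j" d r] row_of_alpha[of j d r] \<open>r < d\<close>
      unfolding young_subgroup_def by auto
    then have "(j \<le> d - r \<and> \<sigma> j \<le> d - r) \<or> \<sigma> j = j"
      by linarith
    then show ?thesis
      using row0 by auto
  qed
  with \<sigma> show "\<sigma> \<in> young_subgroup d lam"
    unfolding young_subgroup_def by auto
qed

theorem proposition7p4:
  fixes d r :: nat and lam :: "nat list"
  assumes "r \<ge> 1" and "d > r + 1"
    and "is_partition d lam" and "dominates lam (alpha d r)"
  shows "\<exists>\<phi> :: ((nat \<Rightarrow> nat) set \<Rightarrow> 'k::comm_ring_1) \<Rightarrow> ((nat \<Rightarrow> nat) set \<Rightarrow> 'k).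
           kW_embedding d lam (alpha d r) \<phi>"
proof (rule kW_embedding_of_young_subgroup_subset)
  have "sum_list (take 1 (alpha d r)) \<le> sum_list (take 1 lam)"
    using assms(4) unfolding dominates_def by blast
  then have "d - r \<le> sum_list (take 1 lam)"
    by (simp add: alpha_def)
  with \<open>d > r + 1\<close> show "young_subgroup d (alpha d r) \<subseteq> young_subgroup d lam"
    by (intro young_subgroup_alpha_subset) simp_all
qed

end
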